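(* Let $A$ be a connected monounary algebra. Then there exists $B\in\mathbf R(A)\cap\mathcal U^\bigstar_c$ with $\mathbf V(A)=\mathbf V(B)$.
   Context: A monounary algebra is a pair $(A,f)$ with $A$ a nonempty set and $f:A\to A$; a partial monounary algebra allows $f$ to be partial. Direct products are coordinatewise. It is connected if for all $x,y$ there are $m,n\ge0$ with $f^m(x)=f^n(y)$. A retract of $A$ is a nonempty subalgebra $M$ such that there is an endomorphism $h:A\to M$ with $h|_M=\mathrm{id}$; $\mathbf R(A)$ is the class of algebras isomorphic to a retract of $A$. A retract variety is a class closed under isomorphisms, retracts and direct products; $\mathbf V(\mathcal K)$ is the smallest retract variety containing $\mathcal K$. For $x\in A$: $f^{-1}(x)=\{y:f(y)=x\}$, $f^{-n}(x)=\bigcup_{z\in f^{-(n-1)}(x)}f^{-1}(z)$, $P(x)=\{x\}\cup\bigcup_{n\ge1}f^{-n}(x)$, regarded as a partial monounary algebra with $f$ restricted to those $y\in P(x)$ with $f(y)\in P(x)$. Condition ($\bigstar$) on $(A,f)$: whenever $x_1,x_2,x_3\in A$ with $f(x_1)=f(x_2)=f(x_3)$ and $P(x_1),P(x_2),P(x_3)$ pairwise isomorphic, then $|\{x_1,x_2,x_3\}|\le2$. $\mathcal U^\bigstar_c$ is the class of connected monounary algebras satisfying ($\bigstar$). *)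

theory Defs
  imports "HOL-Library.FuncSet"
begin

text \<open>A monounary algebra is represented by a carrier set A and a map f
  (only its values on A matter).\<close>

definition mono_alg :: "'a set \<Rightarrow> ('a \<Rightarrow> 'a) \<Rightarrow> bool" where
  "mono_alg A f \<longleftrightarrow> A \<noteq> {} \<and> (\<forall>x\<in>A. f x \<in> A)"

definition mhom :: "'a set \<Rightarrow> ('a \<Rightarrow> 'a) \<Rightarrow> 'b set \<Rightarrow> ('b \<Rightarrow> 'b) \<Rightarrow> ('a \<Rightarrow> 'b) \<Rightarrow> bool" where
  "mhom A f B g h \<longleftrightarrow> (\<forall>x\<in>A. h x \<in> B) \<and> (\<forall>x\<in>A. h (f x) = g (h x))"

definition miso :: "'a set \<Rightarrow> ('a \<Rightarrow> 'a) \<Rightarrow> 'b set \<Rightarrow> ('b \<Rightarrow> 'b) \<Rightarrow> ('a \<Rightarrow> 'b) \<Rightarrow> bool" where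
  "miso A f B g h \<longleftrightarrow> mhom A f B g h \<and> bij_betw h A B"

definition is_retract :: "'a set \<Rightarrow> ('a \<Rightarrow> 'a) \<Rightarrow> 'a set \<Rightarrow> bool" where
  "is_retract A f M \<longleftrightarrow> M \<noteq> {} \<and> M \<subseteq> A \<and> (\<forall>x\<in>M. f x \<in> M) \<and>
     (\<exists>h. mhom A f M f h \<and> (\<forall>x\<in>M. h x = x))"

definition in_R :: "'a set \<Rightarrow> ('a \<Rightarrow> 'a) \<Rightarrow> 'b set \<Rightarrow> ('b \<Rightarrow> 'b) \<Rightarrow> bool" where
  "in_R A f C g \<longleftrightarrow> (\<exists>M h. is_retract A f M \<and> miso C g M f h)"

definition pow_fun :: "'i set \<Rightarrow> ('b \<Rightarrow> 'b) \<Rightarrow> ('i \<Rightarrow> 'b) \<Rightarrow> ('i \<Rightarrow> 'b)" where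
  "pow_fun I g = (\<lambda>\<phi>. restrict (\<lambda>i. g (\<phi> i)) I)"

text \<open>(C,g) belongs to V(B,f), the retract variety generated by (B,f), i.e. to
  I R P {(B,f)}: it is isomorphic to a retract of a direct power (B,f)^I.
  The index set is taken inside the type of maps C -> B, which is large enough
  (the set of homomorphisms C -> B always suffices as index set).\<close>
definition in_V :: "'b set \<Rightarrow> ('b \<Rightarrow> 'b) \<Rightarrow> 'a set \<Rightarrow> ('a \<Rightarrow> 'a) \<Rightarrow> bool" where
  "in_V B f C g \<longleftrightarrow> (\<exists>I :: ('a \<Rightarrow> 'b) set. in_R (Pi\<^sub>E I (\<lambda>_. B)) (pow_fun I f) C g)"

definition same_V :: "'a set \<Rightarrow> ('a \<Rightarrow> 'a) \<Rightarrow> 'b set \<Rightarrow> ('b \<Rightarrow> 'b) \<Rightarrow> bool" where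
  "same_V A f B g \<longleftrightarrow> in_V B g A f \<and> in_V A f B g"

definition connected_alg :: "'a set \<Rightarrow> ('a \<Rightarrow> 'a) \<Rightarrow> bool" where
  "connected_alg A f \<longleftrightarrow> (\<forall>x\<in>A. \<forall>y\<in>A. \<exists>m n. (f ^^ m) x = (f ^^ n) y)"

definition Pset :: "'a set \<Rightarrow> ('a \<Rightarrow> 'a) \<Rightarrow> 'a \<Rightarrow> 'a set" where
  "Pset A f x = {y\<in>A. \<exists>n. (f ^^ n) y = x}"

definition partial_iso :: "'a set \<Rightarrow> 'a set \<Rightarrow> ('a \<Rightarrow> 'a) \<Rightarrow> bool" where
  "partial_iso P Q f \<longleftrightarrow> (\<exists>h. bij_betw h P Q \<and>
     (\<forall>y\<in>P. (f y \<in> P \<longleftrightarrow> f (h y) \<in> Q) \<and> (f y \<in> P \<longrightarrow> h (f y) = f (h y))))"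

definition star_cond :: "'a set \<Rightarrow> ('a \<Rightarrow> 'a) \<Rightarrow> bool" where
  "star_cond A f \<longleftrightarrow> (\<forall>x1\<in>A. \<forall>x2\<in>A. \<forall>x3\<in>A.
     f x1 = f x2 \<and> f x2 = f x3 \<and>
     partial_iso (Pset A f x1) (Pset A f x2) f \<and>
     partial_iso (Pset A f x1) (Pset A f x3) f \<and>
     partial_iso (Pset A f x2) (Pset A f x3) f
     \<longrightarrow> card {x1, x2, x3} \<le> 2)"

definition in_Ustar_c :: "'a set \<Rightarrow> ('a \<Rightarrow> 'a) \<Rightarrow> bool" where
  "in_Ustar_c A f \<longleftrightarrow> mono_alg A f \<and> connected_alg A f \<and> star_cond A f"

end

theory Submission
  imports Defs
begin

text \<open>Let sim be the largest equivalence on A such that related elements have, in every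
  sim-class, the same number of children counted up to two. Keeping all cyclic elements and,
  for every element and every sim-class, only two of its non-cyclic children in that class (all
  of them if there are at most two) yields a subalgebra B. Two siblings in B with isomorphic
  P-sets are sim-related, since the identifications made by the isomorphism, added to sim,
  generate a relation of the same kind; so three of them would be among at most two kept
  children, and B satisfies the star condition.

  Pushing points towards B by recursion on their distance to B, and choosing images among the
  kept children, gives retractions of A onto B. Thanks to the counting property they separate
  the points of A, and one of them, rho, maps the children of any a onto the children in B of
  rho a. The first fact embeds A into a power of B, the second allows to pull points of that
  power back into A along their orbits; so A is a retract of a power of B and V(A) = V(B).\<close>

lemma funpow_Suc_apply: "(f ^^ Suc n) x = (f ^^ n) (f x)"
  by (metis comp_apply funpow_Suc_right)

lemma funpow_mult_fixed: "(f ^^ p) x = x \<Longrightarrow> (f ^^ (p * k)) x = x"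
proof (induction k)
  case (Suc k)
  have "(f ^^ (p * Suc k)) x = (f ^^ p) ((f ^^ (p * k)) x)"
    by (simp only: mult_Suc_right funpow_add comp_apply)
  then show ?case using Suc by simp
qed simp

lemma bij_betw_Int_invariant:
  assumes "bij_betw h X Y" "\<And>w. w \<in> X \<Longrightarrow> w \<in> C \<longleftrightarrow> h w \<in> C"
  shows "bij_betw h (X \<inter> C) (Y \<inter> C)"
proof (rule bij_betw_subset[OF assms(1)])
  show "h ` (X \<inter> C) = Y \<inter> C"
    using assms(2) bij_betw_imp_surj_on[OF assms(1)] by blast
qed blast

section \<open>Counting up to two\<close>

definition card2 :: "'a set \<Rightarrow> nat" where
  "card2 X = (if X = {} then 0 else if \<exists>a\<in>X. \<exists>b\<in>X. a \<noteq> b then 2 else 1)"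

lemma card2_eq_iff:
  "card2 X = card2 Y \<longleftrightarrow>
     (X = {} \<longleftrightarrow> Y = {}) \<and> ((\<exists>a\<in>X. \<exists>b\<in>X. a \<noteq> b) \<longleftrightarrow> (\<exists>a\<in>Y. \<exists>b\<in>Y. a \<noteq> b))"
  unfolding card2_def by auto

lemma card2_le_2: "card2 X \<le> 2"
  unfolding card2_def by simp

lemma card2_mono: "X \<subseteq> Y \<Longrightarrow> card2 X \<le> card2 Y"
  unfolding card2_def by auto

lemma other_element_if_not_small:
  assumes "\<not> (finite X \<and> card X \<le> 2)" "a \<in> X" shows "\<exists>b\<in>X. b \<noteq> a"
proof (rule ccontr)
  assume "\<not> ?thesis"
  then have "X = {a}" using assms(2) by blast
  then show False using assms(1) by simp
qed

lemma card2_eq_card: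
  assumes "finite X" "card X \<le> 2" shows "card2 X = card X"
proof -
  consider "card X = 0" | "card X = 1" | "card X = 2" using assms(2) by linarith
  then show ?thesis
    by cases (use assms(1) in \<open>auto simp: card2_def card_1_singleton_iff card_2_iff\<close>)
qed

lemma card2_eq_2:
  assumes "\<not> (finite X \<and> card X \<le> 2)" shows "card2 X = 2"
proof -
  have "X \<noteq> {}" using assms by auto
  then have "\<exists>a\<in>X. \<exists>b\<in>X. a \<noteq> b" using other_element_if_not_small[OF assms] by blast
  then show ?thesis unfolding card2_def by auto
qed

lemma card2_bij_betw: "bij_betw h X Y \<Longrightarrow> card2 X = card2 Y"
  unfolding card2_eq_iff bij_betw_def inj_on_def by (smt (verit) empty_is_image image_iff)

lemma card2_coarser_mono:
  assumes E: "equiv A E" and F: "equiv A F" and EF: "E \<subseteq> F" and XA: "X \<subseteq> A"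
    and same: "\<And>w. w \<in> A \<Longrightarrow> card2 (X \<inter> E``{w}) = card2 (Y \<inter> E``{w})"
  shows "(X \<inter> F``{z} \<noteq> {} \<longrightarrow> Y \<inter> F``{z} \<noteq> {})
       \<and> ((\<exists>a\<in>X \<inter> F``{z}. \<exists>b\<in>X \<inter> F``{z}. a \<noteq> b) \<longrightarrow> (\<exists>a\<in>Y \<inter> F``{z}. \<exists>b\<in>Y \<inter> F``{z}. a \<noteq> b))"
proof -
  have sub: "E``{w} \<subseteq> F``{z}" if "w \<in> F``{z}" for w
    using that EF F unfolding equiv_def trans_def by blast
  have self: "w \<in> E``{w}" if "w \<in> A" for w
    using E that unfolding equiv_def refl_on_def by blast
  have nonempty: "Y \<inter> E``{w} \<noteq> {}" if "w \<in> X" for w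
    using same[of w] self[of w] that XA unfolding card2_eq_iff by blast
  show ?thesis
  proof (intro conjI impI)
    assume "X \<inter> F``{z} \<noteq> {}"
    then obtain w where "w \<in> X" "w \<in> F``{z}" by blast
    then show "Y \<inter> F``{z} \<noteq> {}" using nonempty sub by blast
  next
    assume "\<exists>a\<in>X \<inter> F``{z}. \<exists>b\<in>X \<inter> F``{z}. a \<noteq> b"
    then obtain a b where ab: "a \<in> X" "b \<in> X" "a \<in> F``{z}" "b \<in> F``{z}" "a \<noteq> b" by blast
    show "\<exists>a\<in>Y \<inter> F``{z}. \<exists>b\<in>Y \<inter> F``{z}. a \<noteq> b"
    proof (cases "(a, b) \<in> E")
      case True
      then have "\<exists>x\<in>X \<inter> E``{a}. \<exists>y\<in>X \<inter> E``{a}. x \<noteq> y" using ab self XA by blast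
      then have "\<exists>x\<in>Y \<inter> E``{a}. \<exists>y\<in>Y \<inter> E``{a}. x \<noteq> y"
        using same[of a] ab XA unfolding card2_eq_iff by blast
      then show ?thesis using sub[OF ab(3)] by blast
    next
      case False
      obtain a' b' where "a' \<in> Y \<inter> E``{a}" "b' \<in> Y \<inter> E``{b}" using nonempty ab by blast
      moreover have "a' \<noteq> b'"
        using False E calculation unfolding equiv_def sym_def trans_def by blast
      ultimately show ?thesis using sub ab by blast
    qed
  qed
qed

lemma card2_coarser:
  assumes "equiv A E" "equiv A F" "E \<subseteq> F" "X \<subseteq> A" "Y \<subseteq> A"
    and "\<And>w. w \<in> A \<Longrightarrow> card2 (X \<inter> E``{w}) = card2 (Y \<inter> E``{w})"
  shows "card2 (X \<inter> F``{z}) = card2 (Y \<inter> F``{z})"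
  unfolding card2_eq_iff
  using card2_coarser_mono[of A E F X Y z] card2_coarser_mono[of A E F Y X z] assms by metis

lemma ex_image_eq_if_card_le_card2:
  assumes "X \<noteq> {}" "finite Y" "Y \<noteq> {}" "card Y \<le> card2 X"
  shows "\<exists>g. g ` X = Y"
proof -
  have "card Y \<noteq> 0" using assms(2,3) by simp
  moreover have "card2 X \<le> 2" by (rule card2_le_2)
  ultimately consider "card Y = 1" | "card Y = 2" "card2 X = 2" using assms(4) by linarith
  then show ?thesis
  proof cases
    case 1
    then obtain y where "Y = {y}" by (meson card_1_singletonE)
    then show ?thesis using assms(1) by (intro exI[of _ "\<lambda>_. y"]) auto
  next
    case 2
    then obtain y1 y2 where Y: "Y = {y1, y2}" by (meson card_2_iff)
    obtain a b where ab: "a \<in> X" "b \<in> X" "a \<noteq> b"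
      using 2(2) assms(1) unfolding card2_def by (auto split: if_splits)
    have "(\<lambda>x. if x = a then y1 else y2) ` X = Y" using ab Y by auto
    then show ?thesis by blast
  qed
qed

lemma trimmed_subset_exists:
  assumes "\<forall>a\<in>X \<inter> P. \<forall>b\<in>X \<inter> P. a = b"
  shows "\<exists>T. T \<subseteq> X \<and> finite T \<and> card T = card2 X \<and> X \<inter> P \<subseteq> T"
proof (cases "finite X \<and> card X \<le> 2")
  case True
  then show ?thesis using card2_eq_card[of X] by (intro exI[of _ X]) simp
next
  case False
  then have "X \<noteq> {}" by auto
  obtain s where s: "s \<in> X" "X \<inter> P \<subseteq> {s}"
  proof (cases "X \<inter> P = {}")
    case True
    then show ?thesis using \<open>X \<noteq> {}\<close> that by blast
  next
    case False
    then obtain s where "s \<in> X \<inter> P" by blast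
    then show ?thesis using assms that by blast
  qed
  obtain w where "w \<in> X" "w \<noteq> s" using other_element_if_not_small[OF False s(1)] by blast
  then have "{s, w} \<subseteq> X" "card {s, w} = card2 X" using s(1) card2_eq_2[OF False] by auto
  then show ?thesis using s(2) by (intro exI[of _ "{s, w}"]) auto
qed

section \<open>Cyclic elements and the relation sim\<close>

locale connected_mono_alg =
  fixes A :: "'a set" and f :: "'a \<Rightarrow> 'a"
  assumes mono_alg: "mono_alg A f" and connected: "connected_alg A f"
begin

lemma closed: "x \<in> A \<Longrightarrow> f x \<in> A"
  using mono_alg unfolding mono_alg_def by blast

lemma nonempty: "A \<noteq> {}"
  using mono_alg unfolding mono_alg_def by blast

lemma meet: "x \<in> A \<Longrightarrow> y \<in> A \<Longrightarrow> \<exists>m n. (f ^^ m) x = (f ^^ n) y"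
  using connected unfolding connected_alg_def by blast

lemma iter_closed: "x \<in> A \<Longrightarrow> (f ^^ n) x \<in> A"
  by (induction n) (auto simp: closed)

definition cyc :: "'a set" where
  "cyc = {x\<in>A. \<exists>n>0. (f ^^ n) x = x}"

lemma cyc_subset: "cyc \<subseteq> A"
  unfolding cyc_def by auto

lemma cyc_f: assumes "x \<in> cyc" shows "f x \<in> cyc"
proof -
  obtain n where "n > 0" "(f ^^ n) x = x" "x \<in> A" using assms unfolding cyc_def by auto
  moreover have "(f ^^ n) (f x) = f ((f ^^ n) x)" by (simp add: funpow_swap1)
  ultimately show ?thesis using closed unfolding cyc_def by auto
qed

lemma cyc_iter: "x \<in> cyc \<Longrightarrow> (f ^^ k) x \<in> cyc"
  by (induction k) (auto simp: cyc_f)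

lemma iter_eq_cyc:
  assumes "x \<in> A" "i < j" "(f ^^ i) x = (f ^^ j) x"
  shows "(f ^^ i) x \<in> cyc"
proof -
  have "(f ^^ (j - i)) ((f ^^ i) x) = (f ^^ (j - i + i)) x" by (simp add: funpow_add)
  also have "j - i + i = j" using assms(2) by simp
  also have "(f ^^ j) x = (f ^^ i) x" using assms(3) by simp
  finally show ?thesis unfolding cyc_def using assms(1,2) iter_closed zero_less_diff by blast
qed

lemma cyc_inj:
  assumes "x \<in> cyc" "y \<in> cyc" "f x = f y" shows "x = y"
proof -
  obtain n where n: "n > 0" "(f ^^ n) x = x" using assms(1) unfolding cyc_def by auto
  obtain m where m: "m > 0" "(f ^^ m) y = y" using assms(2) unfolding cyc_def by auto
  obtain k where k: "n * m = Suc k" using n m by (metis gr0_implies_Suc nat_0_less_mult_iff)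
  have "x = (f ^^ (n * m)) x" using funpow_mult_fixed[OF n(2)] by simp
  also have "\<dots> = (f ^^ (n * m)) y" unfolding k funpow_Suc_apply using assms(3) by simp
  also have "\<dots> = y" using funpow_mult_fixed[OF m(2), of n] by (simp add: mult.commute)
  finally show ?thesis .
qed

lemma cyc_reachable:
  assumes "x \<in> cyc" "y \<in> A" shows "\<exists>n. (f ^^ n) y = x"
proof -
  obtain p where p: "p > 0" "(f ^^ p) x = x" using assms(1) unfolding cyc_def by auto
  obtain m n where mn: "(f ^^ m) y = (f ^^ n) x" using meet assms cyc_subset by blast
  have "(f ^^ ((p - 1) * n + m)) y = (f ^^ ((p - 1) * n + n)) x"
    by (simp add: funpow_add mn)
  also have "(p - 1) * n + n = p * n" using p by (cases p) auto
  finally show ?thesis using funpow_mult_fixed[OF p(2), of n] by metis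
qed

definition children :: "'a \<Rightarrow> 'a set" where
  "children c = {w\<in>A. f w = c}"

definition balanced :: "'a rel \<Rightarrow> 'a \<Rightarrow> 'a \<Rightarrow> bool" where
  "balanced E x y \<longleftrightarrow> (\<forall>z\<in>A. card2 (children x \<inter> E``{z}) = card2 (children y \<inter> E``{z}))"

definition stable :: "'a rel \<Rightarrow> bool" where
  "stable E \<longleftrightarrow> equiv A E \<and> (\<forall>(x, y)\<in>E. balanced E x y)"

definition sim :: "'a rel" where
  "sim = (\<Union>{E. stable E})\<^sup>+"

lemma children_subset: "children c \<subseteq> A"
  unfolding children_def by auto

lemma balanced_coarser:
  "equiv A E \<Longrightarrow> equiv A F \<Longrightarrow> E \<subseteq> F \<Longrightarrow> balanced E x y \<Longrightarrow> balanced F x y"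
  unfolding balanced_def using card2_coarser[OF _ _ _ children_subset children_subset] by blast

lemma equiv_trancl:
  assumes "sym G" "G \<subseteq> A \<times> A" "Id_on A \<subseteq> G" shows "equiv A (G\<^sup>+)"
proof -
  have "G\<^sup>+ \<subseteq> A \<times> A" using assms(2) by (metis trancl_subset_Sigma)
  moreover have "refl_on A (G\<^sup>+)" using assms(3) unfolding refl_on_def by auto
  ultimately show ?thesis using sym_trancl[OF assms(1)] trans_trancl by (blast intro: equivI)
qed

lemma stable_trancl:
  assumes "equiv A (G\<^sup>+)" "\<And>x y. (x, y) \<in> G \<Longrightarrow> balanced (G\<^sup>+) x y"
  shows "stable (G\<^sup>+)"
proof -
  have "balanced (G\<^sup>+) x y" if "(x, y) \<in> G\<^sup>+" for x y
    using that
  proof (induction rule: trancl_induct)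
    case (step y z)
    then show ?case using assms(2)[of y z] unfolding balanced_def by simp
  qed (use assms(2) in blast)
  then show ?thesis unfolding stable_def using assms(1) by blast
qed

lemma stable_Id: "stable (Id_on A)"
  unfolding stable_def balanced_def equiv_def refl_on_def sym_def trans_def by auto

lemma sim_equiv: "equiv A sim"
  unfolding sim_def
proof (rule equiv_trancl)
  show "sym (\<Union>{E. stable E})"
    using sym_UNION[of "{E. stable E}" id] unfolding stable_def equiv_def by auto
  show "\<Union>{E. stable E} \<subseteq> A \<times> A" unfolding stable_def equiv_def by blast
  show "Id_on A \<subseteq> \<Union>{E. stable E}" using stable_Id by blast
qed

lemma stable_subset_sim: "stable E \<Longrightarrow> E \<subseteq> sim"
  unfolding sim_def by (blast intro: r_into_trancl')

lemma stable_sim: "stable sim"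
  unfolding sim_def
proof (rule stable_trancl)
  show "equiv A ((\<Union>{E. stable E})\<^sup>+)" using sim_equiv unfolding sim_def .
  fix x y assume "(x, y) \<in> \<Union>{E. stable E}"
  then obtain E where "stable E" "(x, y) \<in> E" by blast
  then have "equiv A E" "balanced E x y" unfolding stable_def by auto
  then have "balanced sim x y"
    using balanced_coarser sim_equiv stable_subset_sim[OF \<open>stable E\<close>] by blast
  then show "balanced ((\<Union>{E. stable E})\<^sup>+) x y" unfolding sim_def .
qed

lemma sim_balanced: "(x, y) \<in> sim \<Longrightarrow> balanced sim x y"
  using stable_sim unfolding stable_def by blast

lemma sim_refl: "x \<in> A \<Longrightarrow> (x, x) \<in> sim"
  using sim_equiv unfolding equiv_def refl_on_def by blast

lemma sim_sym: "(x, y) \<in> sim \<Longrightarrow> (y, x) \<in> sim"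
  using sim_equiv unfolding equiv_def sym_def by blast

lemma sim_trans: "(x, y) \<in> sim \<Longrightarrow> (y, z) \<in> sim \<Longrightarrow> (x, z) \<in> sim"
  using sim_equiv unfolding equiv_def trans_def by blast

lemma sim_subset: "sim \<subseteq> A \<times> A"
  using sim_equiv unfolding equiv_def by blast

section \<open>The retract B\<close>

definition x0 :: 'a where
  "x0 = (SOME x. x \<in> A)"

definition spine :: "'a set" where
  "spine = range (\<lambda>k. (f ^^ k) x0)"

definition similar_children :: "'a \<Rightarrow> 'a \<Rightarrow> 'a set" where
  "similar_children c z = {w \<in> children c. (w, z) \<in> sim \<and> w \<notin> cyc}"

text \<open>B keeps every cyclic element and, of the non-cyclic children of an element lying in
  one sim-class, only two (all of them if there are at most two); keeping the spine makes
  B nonempty.\<close>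
definition kept_children :: "'a \<Rightarrow> 'a \<Rightarrow> 'a set" where
  "kept_children c z = (SOME T. T \<subseteq> similar_children c z \<and> finite T \<and>
     card T = card2 (similar_children c z) \<and> similar_children c z \<inter> spine \<subseteq> T)"

definition kept :: "'a \<Rightarrow> bool" where
  "kept w \<longleftrightarrow> w \<in> cyc \<or> w \<in> kept_children (f w) w"

definition B :: "'a set" where
  "B = {x\<in>A. \<forall>k. kept ((f ^^ k) x)}"

lemma x0_in: "x0 \<in> A"
  unfolding x0_def using nonempty by (simp add: some_in_eq)

lemma iter_noncyc_sibling:
  assumes "x \<in> A" "k < j" "(f ^^ Suc k) x = (f ^^ Suc j) x" shows "(f ^^ j) x \<in> cyc"
proof -
  have "(f ^^ Suc k) x \<in> cyc" using iter_eq_cyc[OF assms(1) _ assms(3)] assms(2) by simp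
  then have "(f ^^ (j - Suc k)) ((f ^^ Suc k) x) \<in> cyc" by (rule cyc_iter)
  moreover have "j - Suc k + Suc k = j" using assms(2) by simp
  ultimately show ?thesis by (metis comp_apply funpow_add)
qed

lemma similar_children_spine_unique:
  assumes "w \<in> similar_children c z \<inter> spine" "w' \<in> similar_children c z \<inter> spine"
  shows "w = w'"
proof -
  obtain k j where k: "w = (f ^^ k) x0" and j: "w' = (f ^^ j) x0"
    using assms unfolding spine_def by auto
  have "f w = c" "f w' = c" "w \<notin> cyc" "w' \<notin> cyc"
    using assms unfolding similar_children_def children_def by auto
  then have "(f ^^ Suc k) x0 = (f ^^ Suc j) x0" "(f ^^ k) x0 \<notin> cyc" "(f ^^ j) x0 \<notin> cyc"
    using k j by auto
  then show ?thesis
    using k j iter_noncyc_sibling[OF x0_in, of k j] iter_noncyc_sibling[OF x0_in, of j k]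
    by (cases k j rule: linorder_cases) auto
qed

lemma kept_children_spec:
  "kept_children c z \<subseteq> similar_children c z \<and> finite (kept_children c z) \<and>
   card (kept_children c z) = card2 (similar_children c z) \<and>
   similar_children c z \<inter> spine \<subseteq> kept_children c z"
  unfolding kept_children_def
  by (rule someI_ex, rule trimmed_subset_exists) (use similar_children_spine_unique in blast)

lemma kept_children_subset: "kept_children c z \<subseteq> similar_children c z"
  using kept_children_spec by blast

lemma card_kept_children: "finite (kept_children c z) \<and> card (kept_children c z) \<le> 2"
  using kept_children_spec card2_le_2 by simp

lemma card2_kept_children: "card2 (kept_children c z) = card2 (similar_children c z)"
  using kept_children_spec card_kept_children card2_eq_card by metis

lemma kept_children_cong: "(z, z') \<in> sim \<Longrightarrow> kept_children c z = kept_children c z'"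
proof -
  assume "(z, z') \<in> sim"
  then have "similar_children c z = similar_children c z'"
    unfolding similar_children_def using sim_trans sim_sym by blast
  then show ?thesis unfolding kept_children_def by simp
qed

lemma kept_childrenD:
  "w \<in> kept_children c z \<Longrightarrow> w \<in> A \<and> f w = c \<and> (w, z) \<in> sim \<and> w \<notin> cyc"
  using kept_children_subset unfolding similar_children_def children_def by blast

lemma B_subset: "B \<subseteq> A"
  unfolding B_def by auto

lemma B_closed: "x \<in> B \<Longrightarrow> f x \<in> B"
  unfolding B_def using closed by (auto simp: funpow_Suc_apply[symmetric] simp del: funpow.simps)

lemma B_iter: "x \<in> B \<Longrightarrow> (f ^^ n) x \<in> B"
  by (induction n) (auto simp: B_closed)

lemma kept_if_B: "x \<in> B \<Longrightarrow> kept x"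
  unfolding B_def by (metis (mono_tags, lifting) funpow_0 mem_Collect_eq)

lemma B_if_kept: assumes "w \<in> A" "f w \<in> B" "kept w" shows "w \<in> B"
proof -
  have "kept ((f ^^ k) w)" for k
  proof (cases k)
    case (Suc j)
    then show ?thesis using assms(2) unfolding B_def by (simp only: funpow_Suc_apply) blast
  qed (use assms(3) in simp)
  then show ?thesis unfolding B_def using assms by auto
qed

lemma cyc_subset_B: "cyc \<subseteq> B"
  unfolding B_def kept_def using cyc_iter cyc_subset by blast

lemma x0_in_B: "x0 \<in> B"
proof -
  have "kept ((f ^^ k) x0)" for k
  proof -
    have "(f ^^ k) x0 \<notin> cyc \<Longrightarrow> (f ^^ k) x0 \<in> similar_children (f ((f ^^ k) x0)) ((f ^^ k) x0)"
      unfolding similar_children_def children_def using iter_closed[OF x0_in] sim_refl by auto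
    moreover have "(f ^^ k) x0 \<in> spine" unfolding spine_def by auto
    ultimately show ?thesis unfolding kept_def using kept_children_spec by blast
  qed
  then show ?thesis unfolding B_def using x0_in by auto
qed

lemma B_nonempty: "B \<noteq> {}"
  using x0_in_B by auto

lemma kept_children_subset_B: assumes "c \<in> B" "w \<in> kept_children c z" shows "w \<in> B"
proof -
  have w: "w \<in> A" "f w = c" "(w, z) \<in> sim" using kept_childrenD[OF assms(2)] by auto
  then have "kept w" unfolding kept_def using assms(2) kept_children_cong[of w z] by simp
  then show ?thesis using B_if_kept w assms(1) by simp
qed

lemma B_in_kept_children: "w \<in> B \<Longrightarrow> w \<notin> cyc \<Longrightarrow> w \<in> kept_children (f w) w"
  using kept_if_B unfolding kept_def by blast

lemma children_sim_class:
  "y \<notin> cyc \<Longrightarrow> children y \<inter> sim``{z} = similar_children y z"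
  unfolding similar_children_def children_def using cyc_f sim_sym by blast

lemma B_children_sim_class:
  assumes "y \<in> B" "y \<notin> cyc" shows "children y \<inter> B \<inter> sim``{z} = kept_children y z"
proof
  show "children y \<inter> B \<inter> sim``{z} \<subseteq> kept_children y z"
  proof
    fix w assume w: "w \<in> children y \<inter> B \<inter> sim``{z}"
    then have "w \<in> B" "f w = y" "(w, z) \<in> sim" "w \<notin> cyc"
      unfolding children_def using sim_sym cyc_f assms(2) by auto
    then show "w \<in> kept_children y z" using B_in_kept_children kept_children_cong by metis
  qed
  show "kept_children y z \<subseteq> children y \<inter> B \<inter> sim``{z}"
    using kept_children_subset_B[OF assms(1)] kept_childrenD sim_sym
    unfolding children_def by blast
qed

lemma card2_B_children:
  assumes "y \<in> B" "y \<notin> cyc"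
  shows "card2 (children y \<inter> sim``{z}) = card2 (children y \<inter> B \<inter> sim``{z})"
  using children_sim_class[OF assms(2)] B_children_sim_class[OF assms] card2_kept_children by simp

section \<open>The star condition for B\<close>

abbreviation PB :: "'a \<Rightarrow> 'a set" where
  "PB x \<equiv> Pset B f x"

definition partial_iso_map :: "('a \<Rightarrow> 'a) \<Rightarrow> 'a set \<Rightarrow> 'a set \<Rightarrow> bool" where
  "partial_iso_map h P Q \<longleftrightarrow> bij_betw h P Q \<and>
     (\<forall>y\<in>P. (f y \<in> P \<longleftrightarrow> f (h y) \<in> Q) \<and> (f y \<in> P \<longrightarrow> h (f y) = f (h y)))"

lemma partial_iso_iff: "partial_iso P Q f \<longleftrightarrow> (\<exists>h. partial_iso_map h P Q)"
  unfolding partial_iso_def partial_iso_map_def ..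

lemma PB_subset: "PB x \<subseteq> B"
  unfolding Pset_def by auto

lemma PB_self: "x \<in> B \<Longrightarrow> x \<in> PB x"
  unfolding Pset_def by (auto intro: exI[of _ 0])

lemma PB_noncyc: "x \<notin> cyc \<Longrightarrow> y \<in> PB x \<Longrightarrow> y \<notin> cyc"
  unfolding Pset_def using cyc_iter by blast

lemma PB_cyc: "x \<in> cyc \<Longrightarrow> PB x = B"
  unfolding Pset_def using cyc_reachable B_subset by auto

lemma PB_top: assumes "y \<in> PB x" "f y \<notin> PB x" shows "y = x"
proof -
  obtain n where n: "(f ^^ n) y = x" "y \<in> B" using assms(1) unfolding Pset_def by auto
  show ?thesis
  proof (cases n)
    case (Suc m)
    then have "(f ^^ m) (f y) = x" using n by (simp only: funpow_Suc_apply)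
    then have "f y \<in> PB x" unfolding Pset_def using B_closed n(2) by auto
    with assms(2) show ?thesis by simp
  qed (use n in simp)
qed

lemma f_notin_PB: assumes "x \<in> B" "x \<notin> cyc" shows "f x \<notin> PB x"
proof
  assume "f x \<in> PB x"
  then obtain n where "(f ^^ Suc n) x = x" unfolding Pset_def by (auto simp only: funpow_Suc_apply)
  then have "x \<in> cyc" unfolding cyc_def using assms(1) B_subset by blast
  with assms(2) show False by simp
qed

lemma B_children_subset_PB: assumes "y \<in> PB x" shows "children y \<inter> B \<subseteq> PB x"
proof
  fix w assume w: "w \<in> children y \<inter> B"
  obtain n where "(f ^^ n) y = x" using assms unfolding Pset_def by auto
  then have "(f ^^ Suc n) w = x"
    using w unfolding children_def by (simp add: funpow_Suc_apply del: funpow.simps)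
  then show "w \<in> PB x" unfolding Pset_def using w by blast
qed

lemma partial_iso_map_root:
  assumes h: "partial_iso_map h (PB x1) (PB x2)" and x1: "x1 \<in> B" "x1 \<notin> cyc"
  shows "h x1 = x2"
proof -
  have "x1 \<in> PB x1" "f x1 \<notin> PB x1" using PB_self f_notin_PB x1 by auto
  then have "h x1 \<in> PB x2" "f (h x1) \<notin> PB x2"
    using h unfolding partial_iso_map_def by (blast intro: bij_betw_apply)+
  then show ?thesis by (rule PB_top)
qed

lemma partial_iso_map_children:
  assumes h: "partial_iso_map h (PB x1) (PB x2)" and y: "y \<in> PB x1"
  shows "bij_betw h (children y \<inter> B) (children (h y) \<inter> B)"
proof (rule bij_betw_subset)
  have hb: "bij_betw h (PB x1) (PB x2)"
    and hc: "\<And>y. y \<in> PB x1 \<Longrightarrow> (f y \<in> PB x1 \<longleftrightarrow> f (h y) \<in> PB x2) \<and> (f y \<in> PB x1 \<longrightarrow> h (f y) = f (h y))"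
    using h unfolding partial_iso_map_def by auto
  show "bij_betw h (PB x1) (PB x2)" by (rule hb)
  show sub: "children y \<inter> B \<subseteq> PB x1" using B_children_subset_PB[OF y] .
  show "h ` (children y \<inter> B) = children (h y) \<inter> B"
  proof
    show "h ` (children y \<inter> B) \<subseteq> children (h y) \<inter> B"
    proof (rule image_subsetI)
      fix w assume w: "w \<in> children y \<inter> B"
      then have "w \<in> PB x1" "f w = y" using sub unfolding children_def by auto
      then have "f (h w) = h y" using hc y by metis
      moreover have "h w \<in> B" using bij_betw_apply[OF hb \<open>w \<in> PB x1\<close>] PB_subset by blast
      ultimately show "h w \<in> children (h y) \<inter> B" unfolding children_def using B_subset by blast
    qed
    show "children (h y) \<inter> B \<subseteq> h ` (children y \<inter> B)"
    proof
      fix v assume v: "v \<in> children (h y) \<inter> B"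
      have "h y \<in> PB x2" using y hb by (rule bij_betw_apply[rotated])
      then have "v \<in> PB x2" using B_children_subset_PB v by blast
      then obtain w where w: "w \<in> PB x1" "v = h w" using hb unfolding bij_betw_def by auto
      then have "f (h w) \<in> PB x2" using v \<open>h y \<in> PB x2\<close> unfolding children_def by auto
      then have "f w \<in> PB x1" "h (f w) = h y" using hc[OF w(1)] v w unfolding children_def by auto
      then have "f w = y" using hb y unfolding bij_betw_def inj_on_def by blast
      then show "v \<in> h ` (children y \<inter> B)"
        using w PB_subset B_subset unfolding children_def by blast
    qed
  qed
qed

lemma partial_iso_map_balanced:
  assumes h: "partial_iso_map h (PB x1) (PB x2)" and nc: "x1 \<notin> cyc" "x2 \<notin> cyc"
    and E: "equiv A E" "sim \<subseteq> E" and hE: "\<And>w. w \<in> PB x1 \<Longrightarrow> (w, h w) \<in> E"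
    and y: "y \<in> PB x1"
  shows "balanced E y (h y)"
  unfolding balanced_def
proof (intro ballI)
  fix z
  have "h y \<in> PB x2" using h y unfolding partial_iso_map_def by (blast intro: bij_betw_apply)
  then have y_B: "y \<in> B" "y \<notin> cyc" and hy_B: "h y \<in> B" "h y \<notin> cyc"
    using y PB_subset PB_noncyc nc by auto
  have class_inv: "w \<in> E``{z} \<longleftrightarrow> h w \<in> E``{z}" if "w \<in> PB x1" for w
    using hE[OF that] E(1) unfolding equiv_def sym_def trans_def by blast
  have "card2 (children y \<inter> E``{z}) = card2 (children y \<inter> B \<inter> E``{z})"
    by (rule card2_coarser[OF sim_equiv E children_subset])
      (use children_subset card2_B_children[OF y_B] in auto)
  also have "\<dots> = card2 (children (h y) \<inter> B \<inter> E``{z})"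
  proof (rule card2_bij_betw)
    show "bij_betw h (children y \<inter> B \<inter> E``{z}) (children (h y) \<inter> B \<inter> E``{z})"
      by (rule bij_betw_Int_invariant[OF partial_iso_map_children[OF h y]])
        (use B_children_subset_PB[OF y] class_inv in blast)
  qed
  also have "\<dots> = card2 (children (h y) \<inter> E``{z})"
    by (rule sym, rule card2_coarser[OF sim_equiv E children_subset])
      (use children_subset card2_B_children[OF hy_B] in auto)
  finally show "card2 (children y \<inter> E``{z}) = card2 (children (h y) \<inter> E``{z})" .
qed

text \<open>The pairs identified by a partial isomorphism, added to sim, generate a stable
  equivalence; by maximality of sim it is sim itself.\<close>
lemma partial_iso_map_sim:
  assumes h: "partial_iso_map h (PB x1) (PB x2)"
    and x1: "x1 \<in> B" "x1 \<notin> cyc" and x2: "x2 \<notin> cyc"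
  shows "(x1, x2) \<in> sim"
proof -
  have hP: "h y \<in> PB x2" if "y \<in> PB x1" for y
    using h that unfolding partial_iso_map_def by (blast intro: bij_betw_apply)
  define G where "G = sim \<union> {(y, h y) | y. y \<in> PB x1} \<union> {(h y, y) | y. y \<in> PB x1}"
  have sim_le: "sim \<subseteq> G\<^sup>+" unfolding G_def by (blast intro: r_into_trancl')
  have h_rel: "(y, h y) \<in> G\<^sup>+" if "y \<in> PB x1" for y
    unfolding G_def using that by (blast intro: r_into_trancl')
  have eq: "equiv A (G\<^sup>+)"
  proof (rule equiv_trancl)
    show "sym G" unfolding G_def sym_def using sim_sym by blast
    show "G \<subseteq> A \<times> A" unfolding G_def using sim_subset PB_subset B_subset hP by blast
    show "Id_on A \<subseteq> G" unfolding G_def using sim_refl by auto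
  qed
  note balanced_h = partial_iso_map_balanced[OF h x1(2) x2 eq sim_le h_rel]
  have "stable (G\<^sup>+)"
  proof (rule stable_trancl[OF eq])
    fix u v assume "(u, v) \<in> G"
    then consider "(u, v) \<in> sim" | "u \<in> PB x1" "v = h u" | "v \<in> PB x1" "u = h v"
      unfolding G_def by blast
    then show "balanced (G\<^sup>+) u v"
    proof cases
      case 1
      then show ?thesis using balanced_coarser[OF sim_equiv eq sim_le] sim_balanced by blast
    next
      case 2
      then show ?thesis using balanced_h by blast
    next
      case 3
      then show ?thesis using balanced_h[of v] unfolding balanced_def by simp
    qed
  qed
  moreover have "(x1, x2) \<in> G\<^sup>+"
    using h_rel[OF PB_self[OF x1(1)]] partial_iso_map_root[OF h x1] by simp
  ultimately show ?thesis using stable_subset_sim by blast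
qed

lemma siblings_partial_iso_sim:
  assumes "x1 \<in> B" "x2 \<in> B" "f x1 = f x2" "x1 \<noteq> x2"
    and "partial_iso (PB x1) (PB x2) f"
  shows "x1 \<notin> cyc \<and> x2 \<notin> cyc \<and> (x1, x2) \<in> sim"
proof -
  obtain h where h: "partial_iso_map h (PB x1) (PB x2)"
    using assms(5) partial_iso_iff by blast
  then have hb: "bij_betw h (PB x1) (PB x2)"
    and hc: "\<And>y. y \<in> PB x1 \<Longrightarrow> f y \<in> PB x1 \<longleftrightarrow> f (h y) \<in> PB x2"
    unfolding partial_iso_map_def by auto
  have "\<not> (x1 \<in> cyc \<and> x2 \<in> cyc)" using cyc_inj assms(3,4) by blast
  moreover have "\<not> (x1 \<in> cyc \<and> x2 \<notin> cyc)"
  proof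
    assume a: "x1 \<in> cyc \<and> x2 \<notin> cyc"
    have "x2 \<in> h ` PB x1" using hb PB_self[OF assms(2)] by (simp add: bij_betw_imp_surj_on)
    then obtain y where y: "y \<in> PB x1" "x2 = h y" by blast
    then have "f y \<in> PB x1" using PB_cyc a B_closed by auto
    then have "f x2 \<in> PB x2" using hc y by blast
    then show False using f_notin_PB assms(2) a by blast
  qed
  moreover have "\<not> (x1 \<notin> cyc \<and> x2 \<in> cyc)"
  proof
    assume a: "x1 \<notin> cyc \<and> x2 \<in> cyc"
    have "h x1 \<in> PB x2" using bij_betw_apply[OF hb PB_self[OF assms(1)]] .
    then have "f (h x1) \<in> PB x2" using PB_cyc a B_closed by auto
    then have "f x1 \<in> PB x1" using hc PB_self[OF assms(1)] by blast
    then show False using f_notin_PB assms(1) a by blast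
  qed
  ultimately have "x1 \<notin> cyc" "x2 \<notin> cyc" by blast+
  then show ?thesis using partial_iso_map_sim[OF h assms(1)] by blast
qed

lemma star_cond_B: "star_cond B f"
  unfolding star_cond_def
proof (intro ballI impI)
  fix x1 x2 x3 assume x: "x1 \<in> B" "x2 \<in> B" "x3 \<in> B" and
    h: "f x1 = f x2 \<and> f x2 = f x3 \<and> partial_iso (PB x1) (PB x2) f \<and>
      partial_iso (PB x1) (PB x3) f \<and> partial_iso (PB x2) (PB x3) f"
  show "card {x1, x2, x3} \<le> 2"
  proof (cases "x1 = x2 \<or> x1 = x3 \<or> x2 = x3")
    case True
    then show ?thesis by (auto simp: card_insert_if)
  next
    case False
    then have "x1 \<notin> cyc \<and> x2 \<notin> cyc \<and> (x1, x2) \<in> sim" "x3 \<notin> cyc \<and> (x1, x3) \<in> sim"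
      using siblings_partial_iso_sim[OF x(1,2)] siblings_partial_iso_sim[OF x(1,3)] h by auto
    then have "x1 \<in> kept_children (f x1) x1" "x2 \<in> kept_children (f x1) x1"
      "x3 \<in> kept_children (f x1) x1"
      using B_in_kept_children[OF x(1)] B_in_kept_children[OF x(2)] B_in_kept_children[OF x(3)]
        kept_children_cong[of x2 x1] kept_children_cong[of x3 x1] sim_sym h by auto
    then have "card {x1, x2, x3} \<le> card (kept_children (f x1) x1)"
      using card_kept_children by (intro card_mono) auto
    then show ?thesis using card_kept_children le_trans by blast
  qed
qed

section \<open>Retractions of A onto B\<close>

definition dist_B :: "'a \<Rightarrow> nat" where
  "dist_B z = (LEAST k. (f ^^ k) z \<in> B)"

lemma B_reachable: assumes "z \<in> A" shows "\<exists>k. (f ^^ k) z \<in> B"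
proof -
  obtain m n where "(f ^^ m) z = (f ^^ n) x0" using meet[OF assms x0_in] by blast
  then show ?thesis using B_iter[OF x0_in_B, of n] by metis
qed

lemma dist_B_in: "z \<in> A \<Longrightarrow> (f ^^ dist_B z) z \<in> B"
  unfolding dist_B_def using B_reachable by (rule LeastI_ex)

lemma dist_B_eq_0: "z \<in> B \<Longrightarrow> dist_B z = 0"
  unfolding dist_B_def by (rule Least_eq_0) simp

lemma dist_B_f: assumes "z \<in> A" "z \<notin> B" shows "dist_B z = Suc (dist_B (f z))"
proof -
  have "(LEAST k. (f ^^ k) z \<in> B) = Suc (LEAST k. (f ^^ Suc k) z \<in> B)"
    by (rule Least_Suc[where P = "\<lambda>k. (f ^^ k) z \<in> B"])
      (use dist_B_in[OF assms(1)] assms(2) in \<open>simp_all add: dist_B_def\<close>)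
  then show ?thesis unfolding dist_B_def by (simp only: funpow_Suc_apply)
qed

text \<open>A choice function ch a t z picks the image of a child z of a once a is sent to t.\<close>
primrec retr_rec :: "('a \<Rightarrow> 'a \<Rightarrow> 'a \<Rightarrow> 'a) \<Rightarrow> nat \<Rightarrow> 'a \<Rightarrow> 'a" where
  "retr_rec ch 0 z = z"
| "retr_rec ch (Suc k) z = ch (f z) (retr_rec ch k (f z)) z"

definition retr :: "('a \<Rightarrow> 'a \<Rightarrow> 'a \<Rightarrow> 'a) \<Rightarrow> 'a \<Rightarrow> 'a" where
  "retr ch z = retr_rec ch (dist_B z) z"

definition matched :: "'a \<Rightarrow> 'a \<Rightarrow> bool" where
  "matched a t \<longleftrightarrow> a \<in> A \<and> t \<in> B \<and> (a, t) \<in> sim \<and> (a = t \<or> a \<notin> cyc \<and> t \<notin> cyc)"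

definition admissible :: "('a \<Rightarrow> 'a \<Rightarrow> 'a \<Rightarrow> 'a) \<Rightarrow> bool" where
  "admissible ch \<longleftrightarrow>
     (\<forall>a t z. matched a t \<and> z \<in> children a \<and> z \<notin> B \<longrightarrow> ch a t z \<in> kept_children t z)"

lemma retr_B: "z \<in> B \<Longrightarrow> retr ch z = z"
  unfolding retr_def using dist_B_eq_0 by simp

lemma retr_step: "z \<in> A \<Longrightarrow> z \<notin> B \<Longrightarrow> retr ch z = ch (f z) (retr ch (f z)) z"
  unfolding retr_def using dist_B_f by simp

lemma retr_kept_children:
  assumes "admissible ch" "z \<in> A" "z \<notin> B" "matched (f z) (retr ch (f z))"
  shows "retr ch z \<in> kept_children (retr ch (f z)) z"
  using assms retr_step unfolding admissible_def children_def by simp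

lemma retr_matched:
  assumes ch: "admissible ch" shows "z \<in> A \<Longrightarrow> matched z (retr ch z)"
proof (induction "dist_B z" arbitrary: z)
  case 0
  then have "z \<in> B" using dist_B_in by fastforce
  then show ?case unfolding matched_def using retr_B sim_refl 0 by simp
next
  case (Suc n)
  then have z: "z \<notin> B" "z \<notin> cyc" using dist_B_eq_0 cyc_subset_B by auto
  then have "matched (f z) (retr ch (f z))" using Suc dist_B_f closed by simp
  then have k: "retr ch z \<in> kept_children (retr ch (f z)) z" "retr ch (f z) \<in> B"
    using retr_kept_children[OF ch Suc.prems z(1)] unfolding matched_def by blast+
  then have "retr ch z \<in> B" "(z, retr ch z) \<in> sim" "retr ch z \<notin> cyc"
    using kept_childrenD[OF k(1)] kept_children_subset_B[OF k(2) k(1)] sim_sym by auto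
  then show ?case unfolding matched_def using Suc.prems z by blast
qed

lemma retr_in_B: "admissible ch \<Longrightarrow> z \<in> A \<Longrightarrow> retr ch z \<in> B"
  using retr_matched matched_def by simp

lemma retr_noncyc: "admissible ch \<Longrightarrow> z \<in> A \<Longrightarrow> z \<notin> cyc \<Longrightarrow> retr ch z \<notin> cyc"
  using retr_matched matched_def by fastforce

lemma retr_hom: assumes "admissible ch" "z \<in> A" shows "retr ch (f z) = f (retr ch z)"
proof (cases "z \<in> B")
  case True
  then show ?thesis using retr_B B_closed by simp
next
  case False
  have "retr ch z \<in> kept_children (retr ch (f z)) z"
    using retr_kept_children[OF assms False retr_matched[OF assms(1) closed[OF assms(2)]]] .
  then show ?thesis using kept_childrenD by simp
qed

lemma retr_iter:
  assumes "admissible ch" "z \<in> A" shows "retr ch ((f ^^ k) z) = (f ^^ k) (retr ch z)"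
  by (induction k) (simp_all add: retr_hom[OF assms(1) iter_closed[OF assms(2)]])

lemma card2_similar_children_matched:
  assumes "matched a t" "z \<in> A"
  shows "card2 (similar_children a z) = card2 (similar_children t z)"
proof (cases "a = t")
  case False
  then have nc: "a \<notin> cyc" "t \<notin> cyc" and "balanced sim a t"
    using assms(1) sim_balanced unfolding matched_def by auto
  then show ?thesis
    using assms(2) unfolding balanced_def children_sim_class[OF nc(1)] children_sim_class[OF nc(2)]
    by blast
qed simp

lemma similar_children_card2_le:
  assumes "matched a t" "z \<in> children a" "z \<notin> cyc"
  shows "similar_children t z \<noteq> {} \<and> card2 (similar_children t z) \<le> card2 (children a \<inter> sim``{z})"
proof -
  have z: "z \<in> A" "z \<in> similar_children a z"
    using assms(2,3) children_subset sim_refl unfolding similar_children_def by auto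
  have eq: "card2 (similar_children a z) = card2 (similar_children t z)"
    using card2_similar_children_matched[OF assms(1) z(1)] .
  then have "similar_children t z \<noteq> {}" using z(2) unfolding card2_eq_iff by blast
  moreover have "card2 (similar_children a z) \<le> card2 (children a \<inter> sim``{z})"
    by (rule card2_mono) (use sim_sym in \<open>auto simp: similar_children_def\<close>)
  ultimately show ?thesis using eq by simp
qed

lemma ex_onto_kept_children:
  assumes "matched a t" "z \<in> children a" "z \<notin> cyc"
  shows "\<exists>g. g ` (children a \<inter> sim``{z}) = kept_children t z"
proof (rule ex_image_eq_if_card_le_card2)
  show "children a \<inter> sim``{z} \<noteq> {}" using assms(2) children_subset sim_refl by blast
  show "finite (kept_children t z)" using card_kept_children by blast
  have "card (kept_children t z) = card2 (similar_children t z)"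
    using kept_children_spec by blast
  moreover have "card2 (similar_children t z) \<noteq> 0"
    using similar_children_card2_le[OF assms] unfolding card2_def by simp
  ultimately show "kept_children t z \<noteq> {}" by auto
  show "card (kept_children t z) \<le> card2 (children a \<inter> sim``{z})"
    using similar_children_card2_le[OF assms] \<open>card _ = _\<close> by simp
qed

text \<open>rho treats all children of a in one sim-class at once, mapping them onto the kept
  children of t; this is what makes rho surjective on children.\<close>
definition choice_onto :: "'a \<Rightarrow> 'a \<Rightarrow> 'a \<Rightarrow> 'a" where
  "choice_onto a t z = (SOME g. g ` (children a \<inter> sim``{z}) = kept_children t z) z"

definition rho :: "'a \<Rightarrow> 'a" where
  "rho = retr choice_onto"

lemma choice_onto_image:
  assumes "matched a t" "z \<in> children a" "z \<notin> cyc"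
  shows "choice_onto a t ` (children a \<inter> sim``{z}) = kept_children t z"
proof -
  let ?g = "SOME g. g ` (children a \<inter> sim``{z}) = kept_children t z"
  have g: "?g ` (children a \<inter> sim``{z}) = kept_children t z"
    using someI_ex[OF ex_onto_kept_children[OF assms]] .
  have agree: "choice_onto a t w = ?g w" if "w \<in> children a \<inter> sim``{z}" for w
  proof -
    have "(z, w) \<in> sim" using that by blast
    then have "sim``{w} = sim``{z}" "kept_children t w = kept_children t z"
      using equiv_class_eq[OF sim_equiv] kept_children_cong sim_sym by auto
    then show ?thesis unfolding choice_onto_def by simp
  qed
  have "choice_onto a t ` (children a \<inter> sim``{z}) = ?g ` (children a \<inter> sim``{z})"
    by (rule image_cong[OF refl agree])
  then show ?thesis using g by simp
qed

lemma admissible_choice_onto: "admissible choice_onto"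
  unfolding admissible_def
proof (intro allI impI)
  fix a t z assume h: "matched a t \<and> z \<in> children a \<and> z \<notin> B"
  then have "z \<notin> cyc" using cyc_subset_B by blast
  moreover have "z \<in> children a \<inter> sim``{z}" using h children_subset sim_refl by blast
  ultimately show "choice_onto a t z \<in> kept_children t z"
    using choice_onto_image h by blast
qed

lemma rho_B: "z \<in> B \<Longrightarrow> rho z = z"
  unfolding rho_def by (rule retr_B)

lemma rho_matched: "z \<in> A \<Longrightarrow> matched z (rho z)"
  unfolding rho_def using retr_matched admissible_choice_onto by blast

lemma rho_in_B: "z \<in> A \<Longrightarrow> rho z \<in> B"
  using rho_matched unfolding matched_def by blast

lemma rho_hom: "z \<in> A \<Longrightarrow> rho (f z) = f (rho z)"
  unfolding rho_def using retr_hom admissible_choice_onto by blast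

lemma rho_children_onto:
  assumes a: "a \<in> A" and w: "w \<in> B" "f w = rho a"
  shows "\<exists>z\<in>children a. rho z = w"
proof (cases "a \<in> B")
  case True
  then show ?thesis using w rho_B B_subset unfolding children_def by auto
next
  case False
  let ?t = "rho a"
  have m: "matched a ?t" using rho_matched a by blast
  then have nc: "a \<notin> cyc" "?t \<notin> cyc" using False unfolding matched_def by auto
  have w_nc: "w \<notin> cyc" using w(2) nc(2) cyc_f by metis
  have "w \<in> kept_children ?t w" using B_in_kept_children[OF w(1) w_nc] w(2) by simp
  then have "w \<in> similar_children ?t w" using kept_children_subset by blast
  then obtain z' where "z' \<in> similar_children a w"
    using card2_similar_children_matched[OF m] w(1) B_subset unfolding card2_eq_iff by blast
  then have z': "z' \<in> children a" "(z', w) \<in> sim" "z' \<notin> cyc"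
    unfolding similar_children_def by auto
  have "sim``{z'} = sim``{w}" "kept_children ?t z' = kept_children ?t w"
    using equiv_class_eq[OF sim_equiv z'(2)] kept_children_cong[OF z'(2)] by auto
  moreover note \<open>w \<in> kept_children ?t w\<close>
  ultimately have "w \<in> choice_onto a ?t ` (children a \<inter> sim``{w})"
    using choice_onto_image[OF m z'(1) z'(3)] by simp
  then obtain z where z: "z \<in> children a" "choice_onto a ?t z = w" by blast
  have "z \<notin> B" using z(1) False B_closed unfolding children_def by blast
  then have "rho z = w" using retr_step z unfolding rho_def children_def by auto
  then show ?thesis using z(1) by blast
qed

section \<open>Separation of points and the power of B\<close>

definition Ret :: "('a \<Rightarrow> 'a) set" where
  "Ret = {retr ch | ch. admissible ch}"

lemma rho_in_Ret: "rho \<in> Ret"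
  unfolding Ret_def rho_def using admissible_choice_onto by blast

lemma Ret_in_B: "\<phi> \<in> Ret \<Longrightarrow> z \<in> A \<Longrightarrow> \<phi> z \<in> B"
  unfolding Ret_def using retr_in_B by blast

lemma Ret_hom: "\<phi> \<in> Ret \<Longrightarrow> z \<in> A \<Longrightarrow> \<phi> (f z) = f (\<phi> z)"
  unfolding Ret_def using retr_hom by blast

lemma Ret_iter: "\<phi> \<in> Ret \<Longrightarrow> z \<in> A \<Longrightarrow> \<phi> ((f ^^ k) z) = (f ^^ k) (\<phi> z)"
  unfolding Ret_def using retr_iter by blast

lemma rho_cyc_iff: assumes "z \<in> A" shows "rho z \<in> cyc \<longleftrightarrow> z \<in> cyc"
proof
  show "rho z \<in> cyc \<Longrightarrow> z \<in> cyc"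
    using retr_noncyc[OF admissible_choice_onto assms] unfolding rho_def by blast
  show "z \<in> cyc \<Longrightarrow> rho z \<in> cyc" using rho_B cyc_subset_B by auto
qed

lemma retr_update:
  assumes "z \<in> A" "\<forall>k. (f ^^ k) z \<noteq> u"
  shows "retr (\<lambda>a t v. if a = a0 \<and> t = t0 \<and> v = u then r else ch a t v) z = retr ch z"
  using assms
proof (induction "dist_B z" arbitrary: z)
  case 0
  then have "z \<in> B" using dist_B_in by fastforce
  then show ?case using retr_B by simp
next
  case (Suc n)
  have z: "z \<notin> B" "z \<noteq> u"
    using Suc.hyps(2) dist_B_eq_0 Suc.prems(2)[rule_format, of 0] by auto
  have "\<forall>k. (f ^^ k) (f z) \<noteq> u" using Suc.prems(2) by (metis funpow_Suc_apply)
  moreover have "n = dist_B (f z)" using Suc.hyps(2) dist_B_f[OF Suc.prems(1) z(1)] by simp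
  ultimately have
    "retr (\<lambda>a t v. if a = a0 \<and> t = t0 \<and> v = u then r else ch a t v) (f z) = retr ch (f z)"
    using Suc.hyps(1) closed[OF Suc.prems(1)] by blast
  then show ?case using retr_step[OF Suc.prems(1) z(1)] z(2) by simp
qed

lemma iter_parent_neq_noncyc:
  assumes "u \<in> A" "u \<notin> cyc" shows "(f ^^ k) (f u) \<noteq> u"
proof
  assume "(f ^^ k) (f u) = u"
  then have "(f ^^ Suc k) u = u" by (simp only: funpow_Suc_apply)
  then show False using assms unfolding cyc_def by blast
qed

lemma kept_children_two:
  assumes u: "u1 \<in> A" "u1 \<noteq> u2" "f u2 = f u1" "(u2, u1) \<in> sim" and nc: "u1 \<notin> cyc" "u2 \<notin> cyc"
    and m: "matched (f u1) t"
  shows "\<exists>p\<in>kept_children t u1. \<exists>q\<in>kept_children t u1. p \<noteq> q"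
proof -
  have "u1 \<in> similar_children (f u1) u1" "u2 \<in> similar_children (f u1) u1"
    using u nc sim_refl sim_subset unfolding similar_children_def children_def by blast+
  then show ?thesis
    using card2_similar_children_matched[OF m u(1)] card2_kept_children[of t u1] u(2)
    unfolding card2_eq_iff by blast
qed

lemma siblings_separated_outside_B:
  assumes u: "u1 \<in> A" "u2 \<in> A" "u1 \<noteq> u2" "f u1 = f u2" "u1 \<notin> B"
    and nc: "u1 \<notin> cyc" "u2 \<notin> cyc" and s: "(u1, u2) \<in> sim"
  shows "\<exists>\<phi>\<in>Ret. \<phi> u1 \<noteq> \<phi> u2"
proof -
  define c where "c = f u1"
  define t where "t = rho c"
  have "c \<in> A" using closed u(1) unfolding c_def by simp
  then have "matched c t" using rho_matched unfolding t_def by simp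
  then have "\<exists>p\<in>kept_children t u1. \<exists>q\<in>kept_children t u1. p \<noteq> q"
    unfolding c_def by (rule kept_children_two[OF u(1,3) u(4)[symmetric] sim_sym[OF s] nc])
  then obtain r where r: "r \<in> kept_children t u1" "r \<noteq> rho u2" by blast
  define ch where "ch = (\<lambda>a t' v. if a = c \<and> t' = t \<and> v = u1 then r else choice_onto a t' v)"
  have "admissible ch"
    using admissible_choice_onto r(1) unfolding admissible_def ch_def by auto
  have c_avoids: "\<forall>k. (f ^^ k) c \<noteq> u1"
    using iter_parent_neq_noncyc u(1) nc(1) unfolding c_def by blast
  have "\<forall>k. (f ^^ k) u2 \<noteq> u1"
  proof
    fix k show "(f ^^ k) u2 \<noteq> u1"
    proof (cases k)
      case (Suc j)
      then have "(f ^^ k) u2 = (f ^^ j) c"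
        unfolding c_def using u(4) by (simp only: funpow_Suc_apply)
      then show ?thesis using c_avoids by simp
    qed (use u(3) in simp)
  qed
  then have "retr ch u2 = rho u2"
    unfolding ch_def rho_def by (rule retr_update[OF u(2)])
  moreover have "retr ch c = t"
    unfolding ch_def t_def rho_def by (rule retr_update[OF \<open>c \<in> A\<close> c_avoids])
  then have "retr ch u1 = ch c t u1"
    using retr_step[OF u(1,5)] unfolding c_def by simp
  then have "retr ch u1 = r" unfolding ch_def by simp
  ultimately show ?thesis using \<open>admissible ch\<close> r(2) unfolding Ret_def by auto
qed

lemma siblings_separated:
  assumes u: "u1 \<in> A" "u2 \<in> A" "u1 \<noteq> u2" "f u1 = f u2"
  shows "\<exists>\<phi>\<in>Ret. \<phi> u1 \<noteq> \<phi> u2"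
proof (cases "rho u1 = rho u2")
  case False
  then show ?thesis using rho_in_Ret by blast
next
  case True
  have "(u1, rho u1) \<in> sim" "(u2, rho u2) \<in> sim"
    using rho_matched u unfolding matched_def by auto
  then have s: "(u1, u2) \<in> sim" using True sim_trans sim_sym by metis
  have nc: "u1 \<notin> cyc" "u2 \<notin> cyc"
  proof -
    have "u2 \<in> cyc" if "u1 \<in> cyc" "rho u1 = rho u2" "u1 \<in> A" "u2 \<in> A" for u1 u2
      using that rho_B cyc_subset_B rho_cyc_iff by (metis subsetD)
    then show "u1 \<notin> cyc" "u2 \<notin> cyc" using True cyc_inj u by metis+
  qed
  have "\<not> (u1 \<in> B \<and> u2 \<in> B)" using True rho_B u(3) by force
  then consider "u1 \<notin> B" | "u2 \<notin> B" by blast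
  then show ?thesis
  proof cases
    case 1
    then show ?thesis using siblings_separated_outside_B[OF u 1 nc s] by blast
  next
    case 2
    then show ?thesis
      using siblings_separated_outside_B[OF u(2,1) u(3)[symmetric] u(4)[symmetric] 2 nc(2,1)]
        sim_sym[OF s] by metis
  qed
qed

lemma rho_eq_meet_synchronous:
  assumes a: "a1 \<in> A" "a2 \<in> A" and "rho a1 = rho a2"
    and "(f ^^ m) a1 = (f ^^ n) a2" "m < n"
  shows "(f ^^ m) a1 = (f ^^ m) a2"
proof -
  have e: "rho ((f ^^ m) a1) = (f ^^ m) (rho a1)" "rho ((f ^^ m) a2) = (f ^^ m) (rho a1)"
    using Ret_iter[OF rho_in_Ret] a assms(3) by auto
  have "(f ^^ m) (rho a1) = rho ((f ^^ n) a2)" using e(1) assms(4) by simp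
  also have "\<dots> = (f ^^ n) (rho a1)" using Ret_iter[OF rho_in_Ret a(2)] assms(3) by simp
  finally have "(f ^^ m) (rho a1) \<in> cyc"
    using iter_eq_cyc[OF _ assms(5)] rho_in_B[OF a(1)] B_subset by blast
  then have "(f ^^ m) a1 \<in> cyc" "(f ^^ m) a2 \<in> cyc"
    using rho_cyc_iff[OF iter_closed[OF a(1)], of m] rho_cyc_iff[OF iter_closed[OF a(2)], of m] e
    by simp_all
  then have "rho ((f ^^ m) a1) = (f ^^ m) a1" "rho ((f ^^ m) a2) = (f ^^ m) a2"
    using rho_B cyc_subset_B by auto
  then show ?thesis using e by simp
qed

lemma rho_eq_common_iter:
  assumes a: "a1 \<in> A" "a2 \<in> A" and r: "rho a1 = rho a2"
  shows "\<exists>k. (f ^^ k) a1 = (f ^^ k) a2"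
proof -
  obtain m n where mn: "(f ^^ m) a1 = (f ^^ n) a2" using meet[OF a] by blast
  consider "m = n" | "m < n" | "n < m" by linarith
  then show ?thesis
  proof cases
    case 2
    then show ?thesis using rho_eq_meet_synchronous[OF a r mn] by blast
  next
    case 3
    then show ?thesis using rho_eq_meet_synchronous[OF a(2,1) r[symmetric] mn[symmetric]] by metis
  qed (use mn in blast)
qed

lemma Ret_separates:
  assumes a: "a1 \<in> A" "a2 \<in> A" and h: "\<forall>\<phi>\<in>Ret. \<phi> a1 = \<phi> a2"
  shows "a1 = a2"
proof -
  define j where "j = (LEAST k. (f ^^ k) a1 = (f ^^ k) a2)"
  have "\<exists>k. (f ^^ k) a1 = (f ^^ k) a2" using rho_eq_common_iter[OF a] h rho_in_Ret by blast
  then have j: "(f ^^ j) a1 = (f ^^ j) a2" unfolding j_def by (rule LeastI_ex)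
  show ?thesis
  proof (cases j)
    case (Suc i)
    have "(f ^^ i) a1 \<noteq> (f ^^ i) a2"
    proof
      assume "(f ^^ i) a1 = (f ^^ i) a2"
      then have "j \<le> i" unfolding j_def by (rule Least_le)
      with Suc show False by simp
    qed
    moreover have "f ((f ^^ i) a1) = f ((f ^^ i) a2)" using j Suc by simp
    ultimately obtain \<phi> where \<phi>: "\<phi> \<in> Ret" "\<phi> ((f ^^ i) a1) \<noteq> \<phi> ((f ^^ i) a2)"
      using siblings_separated iter_closed a by blast
    have "\<phi> ((f ^^ i) a1) = (f ^^ i) (\<phi> a1)" using Ret_iter[OF \<phi>(1) a(1)] .
    also have "\<dots> = (f ^^ i) (\<phi> a2)" using bspec[OF h \<phi>(1)] by simp
    also have "\<dots> = \<phi> ((f ^^ i) a2)" using Ret_iter[OF \<phi>(1) a(2)] by simp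
    finally show ?thesis using \<phi>(2) by contradiction
  qed (use j in simp)
qed

definition emb :: "'a \<Rightarrow> ('a \<Rightarrow> 'a) \<Rightarrow> 'a" where
  "emb a = restrict (\<lambda>\<phi>. \<phi> a) Ret"

definition Pw :: "(('a \<Rightarrow> 'a) \<Rightarrow> 'a) set" where
  "Pw = Pi\<^sub>E Ret (\<lambda>_. B)"

definition Fw :: "(('a \<Rightarrow> 'a) \<Rightarrow> 'a) \<Rightarrow> ('a \<Rightarrow> 'a) \<Rightarrow> 'a" where
  "Fw = pow_fun Ret f"

lemma emb_in_Pw: "a \<in> A \<Longrightarrow> emb a \<in> Pw"
  unfolding emb_def Pw_def using Ret_in_B by auto

lemma emb_apply: "\<phi> \<in> Ret \<Longrightarrow> emb a \<phi> = \<phi> a"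
  unfolding emb_def by simp

lemma Fw_apply: "\<phi> \<in> Ret \<Longrightarrow> Fw \<psi> \<phi> = f (\<psi> \<phi>)"
  unfolding Fw_def pow_fun_def by simp

lemma Fw_closed: "\<psi> \<in> Pw \<Longrightarrow> Fw \<psi> \<in> Pw"
  unfolding Pw_def Fw_def pow_fun_def using B_closed by auto

lemma emb_hom: assumes "a \<in> A" shows "emb (f a) = Fw (emb a)"
proof
  fix \<phi> show "emb (f a) \<phi> = Fw (emb a) \<phi>"
    using emb_apply Fw_apply Ret_hom assms unfolding emb_def Fw_def pow_fun_def by auto
qed

lemma Fw_iter_emb: "a \<in> A \<Longrightarrow> (Fw ^^ k) (emb a) = emb ((f ^^ k) a)"
  by (induction k) (simp_all add: emb_hom iter_closed)

lemma inj_on_emb: "inj_on emb A"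
proof (rule inj_onI)
  fix a1 a2 assume a: "a1 \<in> A" "a2 \<in> A" "emb a1 = emb a2"
  then have "\<forall>\<phi>\<in>Ret. \<phi> a1 = \<phi> a2" using emb_apply by metis
  then show "a1 = a2" using Ret_separates a(1,2) by blast
qed

lemma Pw_rho: "\<psi> \<in> Pw \<Longrightarrow> \<psi> rho \<in> B"
  unfolding Pw_def using rho_in_Ret by auto

lemma Fw_rho: "Fw \<psi> rho = f (\<psi> rho)"
  using Fw_apply rho_in_Ret by blast

definition hits :: "(('a \<Rightarrow> 'a) \<Rightarrow> 'a) set" where
  "hits = {\<psi>\<in>Pw. \<exists>k. (Fw ^^ k) \<psi> \<in> emb ` (A - B)}"

definition hit_time :: "(('a \<Rightarrow> 'a) \<Rightarrow> 'a) \<Rightarrow> nat" where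
  "hit_time \<psi> = (LEAST k. (Fw ^^ k) \<psi> \<in> emb ` (A - B))"

text \<open>A point of the power whose orbit never meets emb (A - B) is sent to its rho-coordinate;
  otherwise it is pulled back along its orbit, using that rho maps children onto children.\<close>
primrec lift :: "nat \<Rightarrow> (('a \<Rightarrow> 'a) \<Rightarrow> 'a) \<Rightarrow> 'a" where
  "lift 0 \<psi> = inv_into A emb \<psi>"
| "lift (Suc k) \<psi> = (SOME a. a \<in> A \<and> f a = lift k (Fw \<psi>) \<and> rho a = \<psi> rho)"

definition proj :: "(('a \<Rightarrow> 'a) \<Rightarrow> 'a) \<Rightarrow> 'a" where
  "proj \<psi> = (if \<psi> \<in> hits then lift (hit_time \<psi>) \<psi> else \<psi> rho)"

lemma lift_Suc_spec:
  assumes "\<psi> \<in> Pw" "lift k (Fw \<psi>) \<in> A" "rho (lift k (Fw \<psi>)) = Fw \<psi> rho"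
  shows "lift (Suc k) \<psi> \<in> A \<and> f (lift (Suc k) \<psi>) = lift k (Fw \<psi>) \<and> rho (lift (Suc k) \<psi>) = \<psi> rho"
proof -
  have "rho (lift k (Fw \<psi>)) = f (\<psi> rho)" using assms(3) Fw_rho by simp
  then obtain z where "z \<in> children (lift k (Fw \<psi>))" "rho z = \<psi> rho"
    using rho_children_onto[OF assms(2) Pw_rho[OF assms(1)]] by metis
  then have "\<exists>a. a \<in> A \<and> f a = lift k (Fw \<psi>) \<and> rho a = \<psi> rho"
    unfolding children_def by blast
  then show ?thesis unfolding lift.simps by (rule someI_ex)
qed

lemma lift_spec:
  "\<psi> \<in> Pw \<Longrightarrow> (Fw ^^ k) \<psi> \<in> emb ` (A - B) \<Longrightarrow> lift k \<psi> \<in> A \<and> rho (lift k \<psi>) = \<psi> rho"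
proof (induction k arbitrary: \<psi>)
  case 0
  then obtain a where a: "a \<in> A" "\<psi> = emb a" by auto
  then have "lift 0 \<psi> = a" using inv_into_f_f[OF inj_on_emb] by simp
  then show ?case using a emb_apply[OF rho_in_Ret] by simp
next
  case (Suc k)
  then have "lift k (Fw \<psi>) \<in> A \<and> rho (lift k (Fw \<psi>)) = Fw \<psi> rho"
    using Fw_closed by (simp add: funpow_Suc_apply del: funpow.simps)
  then show ?case using lift_Suc_spec Suc.prems(1) by blast
qed

lemma hit_time_in: assumes "\<psi> \<in> hits" shows "(Fw ^^ hit_time \<psi>) \<psi> \<in> emb ` (A - B)"
proof -
  have "\<exists>k. (Fw ^^ k) \<psi> \<in> emb ` (A - B)" using assms unfolding hits_def by blast
  then show ?thesis unfolding hit_time_def by (rule LeastI_ex)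
qed

lemma proj_in: assumes "\<psi> \<in> Pw" shows "proj \<psi> \<in> A"
  using lift_spec[OF assms hit_time_in] Pw_rho[OF assms] B_subset unfolding proj_def by auto

lemma emb_B_notin_hits: assumes "a \<in> B" shows "emb a \<notin> hits"
proof
  assume "emb a \<in> hits"
  then obtain k b where kb: "(Fw ^^ k) (emb a) = emb b" "b \<in> A" "b \<notin> B"
    unfolding hits_def by blast
  have "a \<in> A" using assms B_subset by blast
  then have "emb ((f ^^ k) a) = emb b" using kb Fw_iter_emb by simp
  then have "(f ^^ k) a = b" using inj_on_emb iter_closed[OF \<open>a \<in> A\<close>] kb(2) by (meson inj_onD)
  then show False using B_iter[OF assms, of k] kb(3) by simp
qed

lemma proj_emb: assumes "a \<in> A" shows "proj (emb a) = a"
proof (cases "a \<in> B")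
  case True
  then show ?thesis
    unfolding proj_def using emb_B_notin_hits emb_apply[OF rho_in_Ret] rho_B by simp
next
  case False
  then have ea: "emb a \<in> emb ` (A - B)" using assms by blast
  then have "emb a \<in> hits" unfolding hits_def using emb_in_Pw[OF assms] by (auto intro: exI[of _ 0])
  moreover have "hit_time (emb a) = 0" unfolding hit_time_def using ea by (intro Least_eq_0) simp
  ultimately show ?thesis unfolding proj_def using inv_into_f_f[OF inj_on_emb assms] by simp
qed

lemma proj_hom: assumes \<psi>: "\<psi> \<in> Pw" shows "proj (Fw \<psi>) = f (proj \<psi>)"
proof (cases "\<psi> \<in> hits")
  case False
  then have "Fw \<psi> \<notin> hits"
    unfolding hits_def using \<psi> by (auto simp: funpow_Suc_apply[symmetric] simp del: funpow.simps)
  then show ?thesis unfolding proj_def using False Fw_rho by simp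
next
  case True
  show ?thesis
  proof (cases "hit_time \<psi>")
    case 0
    then obtain a where a: "a \<in> A" "\<psi> = emb a" using hit_time_in[OF True] by auto
    then show ?thesis using proj_emb emb_hom closed by metis
  next
    case (Suc k)
    have hit: "(Fw ^^ k) (Fw \<psi>) \<in> emb ` (A - B)"
      using hit_time_in[OF True] Suc by (simp add: funpow_Suc_apply del: funpow.simps)
    then have "Fw \<psi> \<in> hits" unfolding hits_def using Fw_closed[OF \<psi>] by blast
    moreover have "hit_time (Fw \<psi>) = k"
      unfolding hit_time_def
    proof (rule Least_equality)
      fix j assume "(Fw ^^ j) (Fw \<psi>) \<in> emb ` (A - B)"
      then have "(Fw ^^ Suc j) \<psi> \<in> emb ` (A - B)" by (simp add: funpow_Suc_apply del: funpow.simps)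
      then have "hit_time \<psi> \<le> Suc j" unfolding hit_time_def by (rule Least_le)
      then show "k \<le> j" using Suc by simp
    qed (rule hit)
    moreover have "f (lift (Suc k) \<psi>) = lift k (Fw \<psi>)"
      using lift_Suc_spec[OF \<psi>] lift_spec[OF Fw_closed[OF \<psi>] hit] by blast
    ultimately show ?thesis unfolding proj_def using True Suc by simp
  qed
qed

lemma A_in_V_B: "in_V B f A f"
proof -
  have "is_retract Pw Fw (emb ` A)"
    unfolding is_retract_def
  proof (intro conjI)
    show "emb ` A \<noteq> {}" using nonempty by simp
    show "emb ` A \<subseteq> Pw" using emb_in_Pw by blast
    show "\<forall>x\<in>emb ` A. Fw x \<in> emb ` A"
    proof
      fix x assume "x \<in> emb ` A"
      then obtain a where "a \<in> A" "x = emb a" by blast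
      then show "Fw x \<in> emb ` A" using emb_hom closed by (metis imageI)
    qed
    have "mhom Pw Fw (emb ` A) Fw (emb \<circ> proj)"
      unfolding mhom_def using proj_in proj_hom emb_hom by simp
    moreover have "\<forall>x\<in>emb ` A. (emb \<circ> proj) x = x" using proj_emb by auto
    ultimately show "\<exists>h. mhom Pw Fw (emb ` A) Fw h \<and> (\<forall>x\<in>emb ` A. h x = x)" by blast
  qed
  moreover have "miso A f (emb ` A) Fw emb"
    unfolding miso_def mhom_def using emb_hom inj_on_emb by (auto simp: bij_betw_def)
  ultimately have "in_R Pw Fw A f" unfolding in_R_def by blast
  then show ?thesis unfolding in_V_def Pw_def Fw_def by blast
qed

lemma B_in_V_A: "in_V A f B f"
proof -
  let ?I = "{id :: 'a \<Rightarrow> 'a}"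
  let ?P = "Pi\<^sub>E ?I (\<lambda>_. A)"
  let ?F = "pow_fun ?I f"
  let ?c = "\<lambda>b. restrict (\<lambda>_. b) ?I"
  have Fc: "?F (?c b) = ?c (f b)" for b unfolding pow_fun_def by auto
  have "is_retract ?P ?F (?c ` B)"
    unfolding is_retract_def
  proof (intro conjI)
    show "?c ` B \<noteq> {}" using B_nonempty by simp
    show "?c ` B \<subseteq> ?P"
    proof (rule image_subsetI)
      fix b assume "b \<in> B"
      then show "?c b \<in> ?P" using B_subset by (simp add: restrict_PiE_iff subset_iff)
    qed
    show "\<forall>x\<in>?c ` B. ?F x \<in> ?c ` B" using Fc B_closed by auto
    let ?h = "\<lambda>\<psi>. ?c (rho (\<psi> id))"
    have "?h (?F \<psi>) = ?F (?h \<psi>)" if "\<psi> \<in> ?P" for \<psi>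
    proof -
      have "\<psi> id \<in> A" "?F \<psi> id = f (\<psi> id)" using that unfolding pow_fun_def by auto
      then show ?thesis using rho_hom Fc by simp
    qed
    moreover have "?h \<psi> \<in> ?c ` B" if "\<psi> \<in> ?P" for \<psi> using that rho_in_B by auto
    ultimately have "mhom ?P ?F (?c ` B) ?F ?h" unfolding mhom_def by blast
    moreover have "\<forall>x\<in>?c ` B. ?h x = x" using rho_B by auto
    ultimately show "\<exists>h. mhom ?P ?F (?c ` B) ?F h \<and> (\<forall>x\<in>?c ` B. h x = x)" by blast
  qed
  moreover have "inj_on ?c B" by (rule inj_onI) (metis restrict_apply' singletonI)
  then have "miso B f (?c ` B) ?F ?c" unfolding miso_def mhom_def bij_betw_def using Fc by auto
  ultimately show ?thesis unfolding in_V_def in_R_def by blast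
qed

lemma B_in_R_A: "in_R A f B f"
proof -
  have "is_retract A f B"
    unfolding is_retract_def mhom_def using B_nonempty B_subset B_closed rho_in_B rho_hom rho_B
    by blast
  moreover have "miso B f B f id" unfolding miso_def mhom_def by auto
  ultimately show ?thesis unfolding in_R_def by blast
qed

lemma B_in_Ustar_c: "in_Ustar_c B f"
  unfolding in_Ustar_c_def mono_alg_def connected_alg_def
  using B_nonempty B_closed star_cond_B meet B_subset by blast

end

theorem lemma4p4:
  fixes A :: "'a set" and f :: "'a \<Rightarrow> 'a"
  assumes "mono_alg A f" and "connected_alg A f"
  shows "\<exists>(B :: 'a set) g. in_R A f B g \<and> in_Ustar_c B g \<and> same_V A f B g"
proof -
  interpret connected_mono_alg A f using assms by unfold_locales
  show ?thesis using B_in_R_A B_in_Ustar_c A_in_V_B B_in_V_A unfolding same_V_def by blast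
qed

end
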